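(* Assume the setting below (in particular $Z_1,Z_2,\dots$ i.i.d. with law $\pi$). Then for any $\alpha\in(0,\alpha_\infty]$, any $p\ge2$ and any $n\in\mathbb N$, $$\mathbb E^{1/p}\bigl[\|J^{(0)}_n\|^p\bigr]\le \mathsf D_1\sqrt{\alpha a p}\,\|\varepsilon\|_\infty,\qquad \mathsf D_1=\sqrt{2\kappa_Q}/a .$$
   Context: Setting: $d\ge1$; $(\mathsf Z,\mathcal Z)$ is a measurable space with a probability measure $\pi$; $\mathbf A:\mathsf Z\to\mathbb R^{d\times d}$ and $\mathbf b:\mathsf Z\to\mathbb R^d$ are measurable, $\bar{\mathbf A}=\int\mathbf A\,d\pi$, $\bar{\mathbf b}=\int\mathbf b\,d\pi$. $\|\cdot\|$ denotes the Euclidean norm on vectors and the spectral norm on matrices. Assume $-\bar{\mathbf A}$ is Hurwitz (every eigenvalue of $\bar{\mathbf A}$ has positive real part) and $C_A:=\sup_{z}\|\mathbf A(z)\|\vee\sup_z\|\tilde{\mathbf A}(z)\|<\infty$, where $\tilde{\mathbf A}(z)=\mathbf A(z)-\bar{\mathbf A}$. Let $\theta^\star=\bar{\mathbf A}^{-1}\bar{\mathbf b}$, $\tilde{\mathbf b}(z)=\mathbf b(z)-\bar{\mathbf b}$, $\varepsilon(z)=\tilde{\mathbf A}(z)\theta^\star-\tilde{\mathbf b}(z)$, and assume $\|\varepsilon\|_\infty:=\sup_z\|\varepsilon(z)\|<\infty$. Let $Q$ be the unique symmetric positive definite matrix with $\bar{\mathbf A}^\top Q+Q\bar{\mathbf A}=\mathrm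 I$; $\|x\|_Q=(x^\top Qx)^{1/2}$, $\|B\|_Q=\max_{\|x\|_Q=1}\|Bx\|_Q$; $\kappa_Q=\lambda_{\max}(Q)/\lambda_{\min}(Q)$; $a=1/(2\|Q\|)$; $\alpha_\infty=\min\{1/(2\|\bar{\mathbf A}\|_Q^2\|Q\|),\ \|Q\|\}$. $Z_1,Z_2,\dots$ are i.i.d. $\mathsf Z$-valued random variables with distribution $\pi$. For a step size $\alpha>0$, define $J^{(0)}_0=0$ and $J^{(0)}_n=(\mathrm I-\alpha\bar{\mathbf A})J^{(0)}_{n-1}-\alpha\varepsilon(Z_n)$ for $n\ge1$. *)

theory Defs
  imports "HOL-Probability.Probability"
begin

definition pos_hurwitz :: "real^'d^'d \<Rightarrow> bool" where
  "pos_hurwitz M \<longleftrightarrow>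
     (\<forall>(l::complex) (v::complex^'d). v \<noteq> 0 \<and>
        (\<chi> i. \<Sum>j\<in>UNIV. complex_of_real (M$i$j) * v$j) = l *s v \<longrightarrow> Re l > 0)"

definition spec_norm :: "real^'n^'m \<Rightarrow> real" where
  "spec_norm M = onorm (\<lambda>x. M *v x)"

definition qnorm :: "real^'d^'d \<Rightarrow> real^'d \<Rightarrow> real" where
  "qnorm Q x = sqrt (x \<bullet> (Q *v x))"

definition qmnorm :: "real^'d^'d \<Rightarrow> real^'d^'d \<Rightarrow> real" where
  "qmnorm Q B = Sup {qnorm Q (B *v x) | x. qnorm Q x = 1}"

definition real_eigenvalues :: "real^'d^'d \<Rightarrow> real set" where
  "real_eigenvalues Q = {l. \<exists>v. v \<noteq> 0 \<and> Q *v v = l *\<^sub>R v}"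

definition kappa :: "real^'d^'d \<Rightarrow> real" where
  "kappa Q = Max (real_eigenvalues Q) / Min (real_eigenvalues Q)"

fun J0 :: "real \<Rightarrow> real^'d^'d \<Rightarrow> ('z \<Rightarrow> real^'d) \<Rightarrow> (nat \<Rightarrow> 'w \<Rightarrow> 'z) \<Rightarrow> nat \<Rightarrow> 'w \<Rightarrow> real^'d" where
  "J0 \<alpha> Ab eps Z 0 \<omega> = 0"
| "J0 \<alpha> Ab eps Z (Suc n) \<omega> = (mat 1 - \<alpha> *\<^sub>R Ab) *v J0 \<alpha> Ab eps Z n \<omega> - \<alpha> *\<^sub>R eps (Z (Suc n) \<omega>)"

end

theory Submission
  imports Defs
begin

(* The Lyapunov equation makes I - alpha Abar a contraction in the Q-norm, by the factor
   sqrt (1 - alpha a).  The Q-norm of J_n is then shown to be sub-Gaussian.  Convexity of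
   w |-> cosh (sqrt w) gives, for ||y||_Q <= c,
     cosh (mu ||x + y||_Q) <= cosh (mu ||x||_Q) cosh (mu c) + <h(x), y>,
   and with x = (I - alpha Abar) J_n, y = - alpha eps(Z_(n+1)) the last term has mean zero
   because Z_(n+1) is independent of J_n and eps is centred.  Iterating gives
   E cosh (mu ||J_n||_Q) <= exp (mu^2 c^2 / (2 alpha a)) with c = alpha sqrt lambda_max ||eps||_inf,
   and the p-th moment follows from t^p <= 2 (p / (e mu))^p cosh (mu t) at mu = sqrt p / sigma. *)

section \<open>Inequalities for the hyperbolic functions\<close>

lemma convex_on_sinh_nonneg: "convex_on {0..} (sinh :: real \<Rightarrow> real)"
  by (intro convex_on_realI[where f'=cosh])
     (auto intro!: derivative_eq_intros simp: cosh_real_nonneg_le_iff)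

lemma sinh_mult_le:
  fixes l t :: real
  assumes "0 \<le> l" "l \<le> 1" "0 \<le> t"
  shows "sinh (l * t) \<le> l * sinh t"
  using convex_onD[OF convex_on_sinh_nonneg, of l 0 t] assms by simp

lemma sinh_div_mono:
  fixes s t :: real
  assumes "0 < s" "s \<le> t"
  shows "sinh s / s \<le> sinh t / t"
  using sinh_mult_le[of "s / t" t] assms by (simp add: field_simps)

lemma convex_on_cosh_sqrt_pos: "convex_on {0<..} (\<lambda>w::real. cosh (sqrt w))"
proof (rule convex_on_realI[where f'="\<lambda>w. sinh (sqrt w) / sqrt w / 2"])
  fix w :: real assume "w \<in> {0<..}"
  then show "((\<lambda>w. cosh (sqrt w)) has_real_derivative sinh (sqrt w) / sqrt w / 2) (at w)"
    by (auto intro!: derivative_eq_intros simp: field_simps)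
next
  fix x y :: real assume "x \<in> {0<..}" "y \<in> {0<..}" "x \<le> y"
  then show "sinh (sqrt x) / sqrt x / 2 \<le> sinh (sqrt y) / sqrt y / 2"
    using sinh_div_mono[of "sqrt x" "sqrt y"] by simp
qed simp

lemma cosh_sqrt_mult_le:
  fixes t y :: real
  assumes t: "0 \<le> t" "t \<le> 1" and y: "0 \<le> y"
  shows "cosh (sqrt (t * y)) \<le> (1 - t) + t * cosh (sqrt y)"
proof -
  define T where "T = sqrt y / 2"
  have cosh_twice: "cosh (2 * z) = 1 + 2 * (sinh z)\<^sup>2" for z :: real
    by (simp add: cosh_double cosh_square_eq)
  have "sinh (sqrt t * T) \<le> sqrt t * sinh T"
    using t y by (intro sinh_mult_le) (auto simp: T_def)
  moreover have "0 \<le> sinh (sqrt t * T)"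
    using t y by (simp add: T_def)
  ultimately have "(sinh (sqrt t * T))\<^sup>2 \<le> (sqrt t * sinh T)\<^sup>2"
    by (intro power_mono)
  then have sinh_sq: "(sinh (sqrt t * T))\<^sup>2 \<le> t * (sinh T)\<^sup>2"
    using t by (simp add: power_mult_distrib)
  have "cosh (sqrt (t * y)) = cosh (2 * (sqrt t * T))"
    by (simp add: real_sqrt_mult T_def)
  also have "\<dots> = 1 + 2 * (sinh (sqrt t * T))\<^sup>2" by (rule cosh_twice)
  also have "\<dots> \<le> 1 + 2 * (t * (sinh T)\<^sup>2)" using sinh_sq by simp
  also have "\<dots> = (1 - t) + t * cosh (2 * T)" unfolding cosh_twice by (simp add: algebra_simps)
  also have "2 * T = sqrt y" by (simp add: T_def)
  finally show ?thesis .
qed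

lemma convex_on_cosh_sqrt: "convex_on {0..} (\<lambda>w::real. cosh (sqrt w))"
proof (rule convex_on_linorderI)
  fix t x y :: real
  assume t: "0 < t" "t < 1" and xy: "x \<in> {0..}" "y \<in> {0..}" "x < y"
  show "cosh (sqrt ((1 - t) *\<^sub>R x + t *\<^sub>R y)) \<le> (1 - t) * cosh (sqrt x) + t * cosh (sqrt y)"
  proof (cases "x = 0")
    case True
    then show ?thesis using cosh_sqrt_mult_le[of t y] t xy by simp
  next
    case False
    then show ?thesis using convex_onD[OF convex_on_cosh_sqrt_pos, of t x y] t xy by simp
  qed
qed simp

lemma exp_neg_le_cosh_sub_sinh:
  fixes s c :: real
  assumes "0 \<le> s" "s \<le> c" "0 < c"
  shows "exp (- s) \<le> cosh c - s / c * sinh c"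
proof -
  define t where "t = s / c"
  have t: "0 \<le> t" "t \<le> 1" "s = t * c" using assms by (auto simp: t_def)
  have "exp (- s) \<le> (1 - t) + t * exp (- c)"
    using convex_onD[OF convex_on_exp[of 1], of t 0 "- c"] t by simp
  also have "\<dots> \<le> cosh c - t * sinh c"
    using t(1,2) cosh_real_ge_1[of c] mult_left_mono[of 1 "cosh c" "1 - t"]
    by (simp add: cosh_minus_sinh[symmetric] algebra_simps)
  finally show ?thesis by (simp add: t_def)
qed

lemma cosh_mult_add_sinh_mult_le:
  fixes r s c v :: real
  assumes r: "0 \<le> r" and s: "0 < s" "s \<le> c" and v: "\<bar>v\<bar> \<le> 1"
  shows "cosh r * cosh s + v * (sinh r * sinh s) \<le> cosh r * cosh c + v * sinh r * (s / c * sinh c)"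
proof -
  define D where "D = s / c * sinh c - sinh s"
  have "0 \<le> D" using sinh_div_mono[OF s] s by (simp add: D_def field_simps)
  moreover have "D \<le> cosh c - cosh s"
    using exp_neg_le_cosh_sub_sinh[of s c] s by (simp add: D_def cosh_minus_sinh[symmetric])
  moreover have "0 \<le> sinh r" "sinh r \<le> cosh r" using r by (auto simp: sinh_le_cosh_real)
  ultimately have "- v * (sinh r * D) \<le> sinh r * D" "sinh r * D \<le> cosh r * D"
    and "cosh r * D \<le> cosh r * (cosh c - cosh s)"
    using v by (auto intro!: mult_right_mono[of "- v" 1, simplified] mult_right_mono mult_left_mono)
  then show ?thesis by (simp add: D_def algebra_simps)
qed

(* Write r^2 + 2u + s^2 as a convex combination of (r - s)^2 and (r + s)^2: convexity of
   cosh o sqrt and the addition theorems give the bound with s for c, and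
   cosh_mult_add_sinh_mult_le then replaces s by c. *)
lemma cosh_sqrt_sum_le:
  fixes r s c u :: real
  assumes r: "0 \<le> r" and s: "0 \<le> s" "s \<le> c" and u: "\<bar>u\<bar> \<le> r * s"
  shows "cosh (sqrt (r\<^sup>2 + 2 * u + s\<^sup>2)) \<le> cosh r * cosh c + sinh r / r * (sinh c / c) * u"
proof (cases "r = 0 \<or> s = 0")
  case True
  then have "u = 0" using u by auto
  then show ?thesis
    using True r s cosh_real_ge_1[of c] cosh_real_ge_1[of r] by (auto simp: cosh_real_nonneg_le_iff)
next
  case False
  then have rs: "0 < r" "0 < s" using r s by auto
  define t where "t = (u + r * s) / (2 * r * s)"
  have t: "0 \<le> t" "t \<le> 1" using u rs by (auto simp: t_def field_simps abs_le_iff)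
  have "r\<^sup>2 + 2 * u + s\<^sup>2 = (1 - t) * (r - s)\<^sup>2 + t * (r + s)\<^sup>2"
    using rs by (simp add: t_def field_simps power2_eq_square)
  moreover have "(r - s)\<^sup>2 \<le> (r + s)\<^sup>2" using rs by (simp add: power2_eq_square algebra_simps)
  ultimately have "cosh (sqrt (r\<^sup>2 + 2 * u + s\<^sup>2))
      \<le> (1 - t) * cosh (sqrt ((r - s)\<^sup>2)) + t * cosh (sqrt ((r + s)\<^sup>2))"
    using convex_onD[OF convex_on_cosh_sqrt, of t "(r - s)\<^sup>2" "(r + s)\<^sup>2"] t by simp
  also have "\<dots> = cosh r * cosh s + u / (r * s) * (sinh r * sinh s)"
    using rs by (simp add: cosh_add cosh_diff t_def field_simps)
  also have "\<dots> \<le> cosh r * cosh c + u / (r * s) * sinh r * (s / c * sinh c)"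
    using rs s u by (intro cosh_mult_add_sinh_mult_le) (auto simp: abs_div abs_mult)
  also have "\<dots> = cosh r * cosh c + sinh r / r * (sinh c / c) * u"
    using rs s by (simp add: field_simps)
  finally show ?thesis .
qed

(* Hoeffding's lemma for a symmetric {-1, 1}-valued variable. *)
lemma cosh_le_exp_square_half: "cosh (x::real) \<le> exp (x\<^sup>2 / 2)"
proof -
  have "cosh y \<le> exp (y\<^sup>2 / 2)" if "0 \<le> y" for y :: real
  proof -
    have "- (2 * y) * (1 / 2) + ln (1 + 1 / 2 * (exp (2 * y) - 1)) \<le> (2 * y)\<^sup>2 / 8"
      using Hoeffdings_lemma_aux[of "2 * y" "1 / 2"] that by simp
    moreover have "1 + 1 / 2 * (exp (2 * y) - 1) = exp y * cosh y"
      by (simp add: cosh_def field_simps flip: exp_add)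
    ultimately have "ln (cosh y) \<le> y\<^sup>2 / 2"
      by (simp add: ln_mult power2_eq_square)
    then show ?thesis by (metis cosh_real_pos exp_le_cancel_iff exp_ln)
  qed
  from this[of "\<bar>x\<bar>"] show ?thesis by simp
qed

lemma powr_le_cosh_mult:
  fixes t \<mu> p :: real
  assumes t: "0 \<le> t" and \<mu>: "0 < \<mu>" and p: "0 < p"
  shows "t powr p \<le> 2 * (p / (exp 1 * \<mu>)) powr p * cosh (\<mu> * t)"
proof (cases "t = 0")
  case True
  then show ?thesis using \<mu> p by simp
next
  case False
  then have "0 < t" using t by simp
  have "ln (\<mu> * t / p) \<le> \<mu> * t / p - 1"
    using \<open>0 < t\<close> \<mu> p by (intro ln_le_minus_one) simp
  then have "p * ln t \<le> p * (ln p - 1 - ln \<mu>) + \<mu> * t"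
    using \<open>0 < t\<close> \<mu> p by (simp add: ln_div ln_mult field_simps)
  then have "t powr p \<le> exp (p * (ln p - 1 - ln \<mu>) + \<mu> * t)"
    using \<open>0 < t\<close> by (simp add: powr_def mult.commute)
  also have "\<dots> = (p / (exp 1 * \<mu>)) powr p * exp (\<mu> * t)"
    using p \<mu> by (simp add: powr_def ln_div ln_mult exp_add)
  also have "\<dots> \<le> (p / (exp 1 * \<mu>)) powr p * (2 * cosh (\<mu> * t))"
    by (intro mult_left_mono) (simp_all add: cosh_def)
  finally show ?thesis by simp
qed

section \<open>Quadratic forms of symmetric matrices\<close>

lemma inner_matrix_symmetric:
  fixes Q :: "real^'n^'n"
  assumes "transpose Q = Q"
  shows "x \<bullet> (Q *v y) = y \<bullet> (Q *v x)"
  by (metis assms dot_lmul_matrix inner_commute vector_transpose_matrix)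

lemma quadratic_form_add:
  fixes Q :: "real^'n^'n"
  assumes "transpose Q = Q"
  shows "(x + y) \<bullet> (Q *v (x + y)) = x \<bullet> (Q *v x) + 2 * (x \<bullet> (Q *v y)) + y \<bullet> (Q *v y)"
  using inner_matrix_symmetric[OF assms, of y x]
  by (simp add: matrix_vector_right_distrib inner_add_left inner_add_right)

lemma quadratic_form_scaleR:
  fixes Q :: "real^'n^'n"
  shows "(t *\<^sub>R x) \<bullet> (Q *v (t *\<^sub>R x)) = t\<^sup>2 * (x \<bullet> (Q *v x))"
  by (simp add: matrix_vector_mult_scaleR power2_eq_square)

lemma psd_cauchy_schwarz:
  fixes P :: "real^'n^'n"
  assumes sym: "transpose P = P" and psd: "\<And>x. 0 \<le> x \<bullet> (P *v x)"
  shows "(x \<bullet> (P *v y))\<^sup>2 \<le> (x \<bullet> (P *v x)) * (y \<bullet> (P *v y))"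
proof -
  define a b c where "a = x \<bullet> (P *v x)" and "b = x \<bullet> (P *v y)" and "c = y \<bullet> (P *v y)"
  have quad: "0 \<le> a + 2 * t * b + t\<^sup>2 * c" for t
    using psd[of "x + t *\<^sub>R y"] quadratic_form_scaleR[of t y P]
    by (simp add: quadratic_form_add[OF sym] a_def b_def c_def matrix_vector_mult_scaleR
        power2_eq_square mult.assoc)
  show ?thesis
  proof (cases "c = 0")
    case True
    have "b = 0"
    proof (rule ccontr)
      assume "b \<noteq> 0"
      then show False using quad[of "- (a + 1) / (2 * b)"] True by (simp add: field_simps)
    qed
    then show ?thesis using True by (simp add: b_def c_def)
  next
    case False
    then have "0 < c" using psd[of y] by (simp add: c_def)
    then show ?thesis
      using quad[of "- b / c"] by (simp add: a_def b_def c_def field_simps power2_eq_square)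
  qed
qed

lemma spec_norm_mult_vector: "norm (M *v x) \<le> spec_norm M * norm x"
  unfolding spec_norm_def by (rule onorm) simp

lemma spec_norm_nonneg: "0 \<le> spec_norm M"
  unfolding spec_norm_def by (intro onorm_pos_le) simp

lemma quadratic_form_le_spec_norm:
  fixes Q :: "real^'n^'n"
  shows "x \<bullet> (Q *v x) \<le> spec_norm Q * (x \<bullet> x)"
proof -
  have "x \<bullet> (Q *v x) \<le> norm x * norm (Q *v x)" by (rule norm_cauchy_schwarz)
  also have "\<dots> \<le> norm x * (spec_norm Q * norm x)"
    by (intro mult_left_mono spec_norm_mult_vector) simp
  finally show ?thesis by (simp add: dot_square_norm power2_eq_square algebra_simps)
qed

lemma norm_matrix_le_spec_norm:
  fixes M :: "real^'n^'m"
  shows "norm M \<le> real CARD('m) * real CARD('n) * spec_norm M"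
proof -
  have entry: "\<bar>M $ i $ j\<bar> \<le> spec_norm M" for i j
  proof -
    have "\<bar>M $ i $ j\<bar> = \<bar>(M *v axis j 1) $ i\<bar>"
      by (simp add: matrix_vector_mult_basis column_def)
    also have "\<dots> \<le> norm (M *v axis j 1)" by (rule component_le_norm_cart)
    also have "\<dots> \<le> spec_norm M" using spec_norm_mult_vector[of M "axis j 1"] by simp
    finally show ?thesis .
  qed
  have "norm M \<le> (\<Sum>i\<in>UNIV. norm (M $ i))" by (simp add: norm_vec_def L2_set_le_sum)
  also have "\<dots> \<le> (\<Sum>i\<in>(UNIV::'m set). \<Sum>j\<in>(UNIV::'n set). \<bar>M $ i $ j\<bar>)"
    by (intro sum_mono norm_le_l1_cart)
  also have "\<dots> \<le> (\<Sum>i\<in>(UNIV::'m set). \<Sum>j\<in>(UNIV::'n set). spec_norm M)"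
    by (intro sum_mono entry)
  finally show ?thesis by simp
qed

lemma rayleigh_minimum_eigenvalue:
  fixes Q :: "real^'n^'n"
  assumes sym: "transpose Q = Q"
  obtains m where "m \<in> real_eigenvalues Q" "\<And>x. m * (x \<bullet> x) \<le> x \<bullet> (Q *v x)"
proof -
  let ?f = "\<lambda>x::real^'n. x \<bullet> (Q *v x)"
  have "axis undefined 1 \<in> sphere (0::real^'n) 1" by simp
  moreover have "continuous_on (sphere 0 1) ?f"
    by (intro continuous_intros linear_continuous_on) simp
  ultimately obtain v where v: "v \<in> sphere 0 1" and v_min: "\<And>y. y \<in> sphere 0 1 \<Longrightarrow> ?f v \<le> ?f y"
    using continuous_attains_inf[OF compact_sphere, of 0 1 ?f] by blast
  define m where "m = ?f v"
  have low: "m * (x \<bullet> x) \<le> ?f x" for x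
  proof (cases "x = 0")
    case False
    define y where "y = (1 / norm x) *\<^sub>R x"
    have "m \<le> ?f y" using False by (intro v_min[unfolded m_def[symmetric]]) (simp add: y_def)
    moreover have "?f x = (norm x)\<^sup>2 * ?f y"
      using False quadratic_form_scaleR[of "norm x" y Q] by (simp add: y_def)
    ultimately show ?thesis by (simp add: power2_norm_eq_inner mult.commute[of m] mult_left_mono)
  qed simp
  define P where "P = Q - m *\<^sub>R (mat 1 :: real^'n^'n)"
  have Px: "P *v x = Q *v x - m *\<^sub>R x" for x
    by (simp add: P_def matrix_vector_mult_diff_rdistrib flip: scaleR_matrix_vector_assoc)
  have P_sym: "transpose P = P"
    using sym by (simp add: P_def transpose_def vec_eq_iff mat_def)
  have P_psd: "0 \<le> x \<bullet> (P *v x)" for x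
    using low[of x] by (simp add: Px inner_diff_right)
  have "v \<bullet> (P *v v) = 0"
    using v by (simp add: Px inner_diff_right m_def dot_square_norm)
  \<comment> \<open>the minimiser is a zero of the positive semidefinite form of \<open>P\<close>, hence in its kernel\<close>
  moreover have "((P *v v) \<bullet> (P *v v))\<^sup>2 \<le> ((P *v v) \<bullet> (P *v (P *v v))) * (v \<bullet> (P *v v))"
    by (rule psd_cauchy_schwarz[OF P_sym P_psd])
  ultimately have "(P *v v) \<bullet> (P *v v) = 0" by simp
  then have "Q *v v = m *\<^sub>R v" by (simp add: Px)
  then have "m \<in> real_eigenvalues Q" using v by (auto simp: real_eigenvalues_def intro!: exI[of _ v])
  then show ?thesis using that low by blast
qed

lemma finite_real_eigenvalues:
  fixes Q :: "real^'n^'n"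
  assumes sym: "transpose Q = Q"
  shows "finite (real_eigenvalues Q)"
proof -
  let ?E = "real_eigenvalues Q"
  define g where "g l = (SOME v. v \<noteq> 0 \<and> Q *v v = l *\<^sub>R v)" for l
  have g: "g l \<noteq> 0" "Q *v g l = l *\<^sub>R g l" if "l \<in> ?E" for l
    using someI_ex[of "\<lambda>v. v \<noteq> 0 \<and> Q *v v = l *\<^sub>R v"] that
    by (auto simp: g_def real_eigenvalues_def)
  have "inj_on g ?E"
  proof (rule inj_onI)
    fix l1 l2 assume l: "l1 \<in> ?E" "l2 \<in> ?E" "g l1 = g l2"
    then have "l1 *\<^sub>R g l1 = l2 *\<^sub>R g l1" using g(2)[OF l(1)] g(2)[OF l(2)] by metis
    then show "l1 = l2" using g(1)[OF l(1)] by simp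
  qed
  moreover have "pairwise orthogonal (g ` ?E)"
  proof (rule pairwiseI, clarify)
    fix l1 l2 assume l: "l1 \<in> ?E" "l2 \<in> ?E" "g l1 \<noteq> g l2"
    have "l1 * (g l1 \<bullet> g l2) = g l2 \<bullet> (Q *v g l1)" using g[OF l(1)] by (simp add: inner_commute)
    also have "\<dots> = g l1 \<bullet> (Q *v g l2)" by (rule inner_matrix_symmetric[OF sym])
    also have "\<dots> = l2 * (g l1 \<bullet> g l2)" using g[OF l(2)] by simp
    finally show "orthogonal (g l1) (g l2)"
      using l by (auto simp: orthogonal_def)
  qed
  then have "independent (g ` ?E)"
    using g(1) by (intro pairwise_orthogonal_independent) auto
  then have "finite (g ` ?E)" using independent_bound by blast
  ultimately show ?thesis using finite_imageD by blast
qed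

locale sym_pos_def =
  fixes Q :: "real^'n^'n"
  assumes symmetric: "transpose Q = Q"
    and pos_def: "\<And>x. x \<noteq> 0 \<Longrightarrow> 0 < x \<bullet> (Q *v x)"
begin

definition lmin :: real where "lmin = Min (real_eigenvalues Q)"
definition lmax :: real where "lmax = Max (real_eigenvalues Q)"

lemma quadratic_form_nonneg: "0 \<le> x \<bullet> (Q *v x)"
  using pos_def[of x] by (cases "x = 0") (simp_all add: less_imp_le)

lemma qnorm_square: "(qnorm Q x)\<^sup>2 = x \<bullet> (Q *v x)"
  using quadratic_form_nonneg[of x] by (simp add: qnorm_def)

lemma qnorm_nonneg: "0 \<le> qnorm Q x"
  by (simp add: qnorm_def quadratic_form_nonneg)

lemma qnorm_scaleR: "qnorm Q (t *\<^sub>R x) = \<bar>t\<bar> * qnorm Q x"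
  unfolding qnorm_def quadratic_form_scaleR by (simp add: real_sqrt_mult)

lemma qnorm_cauchy_schwarz: "\<bar>x \<bullet> (Q *v y)\<bar> \<le> qnorm Q x * qnorm Q y"
  using real_sqrt_le_mono[OF psd_cauchy_schwarz[OF symmetric quadratic_form_nonneg, of x y]]
  by (simp add: qnorm_def real_sqrt_mult)

lemma lmin_le_quadratic_form: "lmin * (x \<bullet> x) \<le> x \<bullet> (Q *v x)"
proof -
  obtain m where "m \<in> real_eigenvalues Q" "m * (x \<bullet> x) \<le> x \<bullet> (Q *v x)"
    using rayleigh_minimum_eigenvalue[OF symmetric] by metis
  moreover from this have "lmin \<le> m"
    unfolding lmin_def by (intro Min_le finite_real_eigenvalues[OF symmetric])
  ultimately show ?thesis
    using mult_right_mono[of lmin m "x \<bullet> x"] by simp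
qed

lemma quadratic_form_le_lmax: "x \<bullet> (Q *v x) \<le> lmax * (x \<bullet> x)"
proof -
  have neg: "(- Q) *v y = - (Q *v y)" for y
    by (simp add: vec_eq_iff matrix_vector_mult_def sum_negf)
  have "transpose (- Q) = - Q" using symmetric by (simp add: transpose_def vec_eq_iff)
  then obtain m where m: "m \<in> real_eigenvalues (- Q)" "m * (x \<bullet> x) \<le> x \<bullet> ((- Q) *v x)"
    using rayleigh_minimum_eigenvalue by metis
  then have "- m \<in> real_eigenvalues Q"
    by (auto simp: real_eigenvalues_def neg minus_equation_iff[of "Q *v _"])
  then have "- m \<le> lmax"
    unfolding lmax_def by (intro Max_ge finite_real_eigenvalues[OF symmetric])
  then have "- m * (x \<bullet> x) \<le> lmax * (x \<bullet> x)" by (intro mult_right_mono) simp_all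
  with m(2) show ?thesis by (simp add: neg)
qed

lemma lmin_pos: "0 < lmin"
proof -
  obtain m where "m \<in> real_eigenvalues Q" using rayleigh_minimum_eigenvalue[OF symmetric] by metis
  then have "lmin \<in> real_eigenvalues Q"
    unfolding lmin_def by (intro Min_in finite_real_eigenvalues[OF symmetric]) auto
  then obtain v where "v \<noteq> 0" "Q *v v = lmin *\<^sub>R v" by (auto simp: real_eigenvalues_def)
  then show ?thesis using pos_def[of v] inner_ge_zero[of v] by (auto simp: zero_less_mult_iff)
qed

lemma lmin_le_lmax: "lmin \<le> lmax"
  using lmin_le_quadratic_form[of "axis undefined 1"] quadratic_form_le_lmax[of "axis undefined 1"]
  by simp

lemma kappa_pos: "0 < kappa Q"
  using lmin_pos lmin_le_lmax by (simp add: kappa_def lmin_def[symmetric] lmax_def[symmetric])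

lemma norm_le_qnorm: "sqrt lmin * norm x \<le> qnorm Q x"
  using real_sqrt_le_mono[OF lmin_le_quadratic_form[of x]]
  by (simp add: qnorm_def real_sqrt_mult norm_eq_sqrt_inner)

lemma qnorm_le_norm: "qnorm Q x \<le> sqrt lmax * norm x"
  using real_sqrt_le_mono[OF quadratic_form_le_lmax[of x]]
  by (simp add: qnorm_def real_sqrt_mult norm_eq_sqrt_inner)

lemma cosh_norm_le_cosh_qnorm:
  assumes "0 \<le> \<mu>"
  shows "cosh (\<mu> * norm x) \<le> cosh (\<mu> / sqrt lmin * qnorm Q x)"
proof -
  have "norm x \<le> qnorm Q x / sqrt lmin"
    using norm_le_qnorm[of x] lmin_pos by (simp add: field_simps)
  then show ?thesis
    using mult_left_mono[of "norm x" "qnorm Q x / sqrt lmin" \<mu>] assms lmin_pos qnorm_nonneg[of x]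
    by (simp add: cosh_real_nonneg_le_iff)
qed

lemma spec_norm_pos: "0 < spec_norm Q"
  using pos_def[of "axis undefined 1"] quadratic_form_le_spec_norm[of "axis undefined 1" Q]
  by simp

lemma qnorm_mult_le_qmnorm: "qnorm Q (B *v x) \<le> qmnorm Q B * qnorm Q x"
proof (cases "x = 0")
  case False
  define y where "y = (1 / qnorm Q x) *\<^sub>R x"
  have qx: "0 < qnorm Q x" using pos_def[OF False] by (simp add: qnorm_def)
  have "bdd_above {qnorm Q (B *v z) |z. qnorm Q z = 1}"
  proof (rule bdd_aboveI)
    fix s assume "s \<in> {qnorm Q (B *v z) |z. qnorm Q z = 1}"
    then obtain z where s: "s = qnorm Q (B *v z)" and z: "qnorm Q z = 1" by blast
    have "sqrt lmin * s \<le> sqrt lmin * (sqrt lmax * norm (B *v z))"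
      unfolding s using qnorm_le_norm lmin_pos by (intro mult_left_mono) simp_all
    also have "\<dots> \<le> sqrt lmax * (spec_norm B * (sqrt lmin * norm z))"
      using spec_norm_mult_vector[of B z] lmin_pos lmin_le_lmax
      by (simp add: mult_left_mono mult.left_commute)
    also have "\<dots> \<le> sqrt lmax * (spec_norm B * 1)"
      using norm_le_qnorm[of z] z lmin_pos lmin_le_lmax spec_norm_nonneg[of B]
      by (intro mult_left_mono) simp_all
    finally have "sqrt lmin * s \<le> sqrt lmax * spec_norm B" by simp
    then show "s \<le> sqrt lmax * spec_norm B / sqrt lmin"
      using lmin_pos by (simp add: field_simps)
  qed
  moreover have "qnorm Q y = 1" using qx by (simp add: y_def qnorm_scaleR)
  ultimately have "qnorm Q (B *v y) \<le> qmnorm Q B"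
    unfolding qmnorm_def by (intro cSup_upper) auto
  moreover have "qnorm Q (B *v y) = qnorm Q (B *v x) / qnorm Q x"
    using qx by (simp add: y_def matrix_vector_mult_scaleR qnorm_scaleR)
  ultimately show ?thesis using qx by (simp add: field_simps)
qed (simp add: qnorm_def)

lemma lyapunov_inner:
  assumes lyap: "transpose Ab ** Q + Q ** Ab = mat 1"
  shows "x \<bullet> x = 2 * (x \<bullet> (Q *v (Ab *v x)))"
proof -
  have "x \<bullet> x = x \<bullet> ((transpose Ab ** Q + Q ** Ab) *v x)" using lyap by simp
  also have "\<dots> = x \<bullet> (transpose Ab *v (Q *v x)) + x \<bullet> (Q *v (Ab *v x))"
    by (simp add: matrix_vector_mult_add_rdistrib inner_add_right matrix_vector_mul_assoc)
  also have "x \<bullet> (transpose Ab *v (Q *v x)) = (Ab *v x) \<bullet> (Q *v x)"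
    by (metis dot_lmul_matrix vector_transpose_matrix)
  finally show ?thesis
    using inner_matrix_symmetric[OF symmetric, of x "Ab *v x"] by simp
qed

lemma lyapunov_contraction:
  assumes lyap: "transpose Ab ** Q + Q ** Ab = mat 1"
    and \<alpha>: "0 < \<alpha>" "\<alpha> \<le> 1 / (2 * (qmnorm Q Ab)\<^sup>2 * spec_norm Q)"
  shows "(qnorm Q ((mat 1 - \<alpha> *\<^sub>R Ab) *v x))\<^sup>2 \<le> (1 - \<alpha> / (2 * spec_norm Q)) * (qnorm Q x)\<^sup>2"
proof -
  define y where "y = Ab *v x"
  define N where "N = qmnorm Q Ab"
  have xx: "x \<bullet> x = 2 * (x \<bullet> (Q *v y))"
    unfolding y_def by (rule lyapunov_inner[OF lyap])
  have y_le: "(qnorm Q y)\<^sup>2 \<le> N\<^sup>2 * (qnorm Q x)\<^sup>2"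
    unfolding y_def N_def power_mult_distrib[symmetric]
    by (intro power_mono qnorm_mult_le_qmnorm qnorm_nonneg)
  have \<alpha>N: "\<alpha>\<^sup>2 * N\<^sup>2 \<le> \<alpha> / (2 * spec_norm Q)"
  proof (cases "N = 0")
    case False
    then have "0 < 2 * N\<^sup>2 * spec_norm Q" using spec_norm_pos by simp
    then have "\<alpha> * (2 * N\<^sup>2 * spec_norm Q) \<le> 1" using \<alpha>(2) by (simp add: N_def le_divide_eq)
    then show ?thesis using \<alpha> spec_norm_pos by (simp add: field_simps power2_eq_square)
  qed (use \<alpha> spec_norm_pos in simp)
  have "\<alpha>\<^sup>2 * (qnorm Q y)\<^sup>2 \<le> (\<alpha>\<^sup>2 * N\<^sup>2) * (qnorm Q x)\<^sup>2"
    using mult_left_mono[OF y_le, of "\<alpha>\<^sup>2"] by simp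
  also have "\<dots> \<le> \<alpha> / (2 * spec_norm Q) * (qnorm Q x)\<^sup>2"
    using \<alpha>N by (rule mult_right_mono) simp
  finally have y_small: "\<alpha>\<^sup>2 * (qnorm Q y)\<^sup>2 \<le> \<alpha> / (2 * spec_norm Q) * (qnorm Q x)\<^sup>2" .
  have x_large: "(qnorm Q x)\<^sup>2 / spec_norm Q \<le> x \<bullet> x"
    using quadratic_form_le_spec_norm[of x Q] spec_norm_pos by (simp add: qnorm_square field_simps)
  have "(qnorm Q ((mat 1 - \<alpha> *\<^sub>R Ab) *v x))\<^sup>2
      = (qnorm Q x)\<^sup>2 - \<alpha> * (x \<bullet> x) + \<alpha>\<^sup>2 * (qnorm Q y)\<^sup>2"
  proof -
    have Bx: "(mat 1 - \<alpha> *\<^sub>R Ab) *v x = x - \<alpha> *\<^sub>R y"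
      by (simp add: y_def matrix_vector_mult_diff_rdistrib flip: scaleR_matrix_vector_assoc)
    show ?thesis
      unfolding qnorm_square xx Bx using inner_matrix_symmetric[OF symmetric, of y x]
      by (simp add: algebra_simps power2_eq_square)
  qed
  also have "\<dots> \<le> (qnorm Q x)\<^sup>2 - \<alpha> * ((qnorm Q x)\<^sup>2 / spec_norm Q)
      + \<alpha> / (2 * spec_norm Q) * (qnorm Q x)\<^sup>2"
    using x_large y_small \<alpha> by (intro add_mono diff_mono mult_left_mono) auto
  also have "\<dots> = (1 - \<alpha> / (2 * spec_norm Q)) * (qnorm Q x)\<^sup>2"
    using spec_norm_pos by (simp add: field_simps)
  finally show ?thesis .
qed

lemma cosh_qnorm_add_le:
  assumes \<mu>: "0 < \<mu>" and y: "qnorm Q y \<le> c"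
  shows "cosh (\<mu> * qnorm Q (x + y))
    \<le> cosh (\<mu> * qnorm Q x) * cosh (\<mu> * c)
      + sinh (\<mu> * qnorm Q x) / (\<mu> * qnorm Q x) * (sinh (\<mu> * c) / (\<mu> * c)) * (\<mu>\<^sup>2 * (x \<bullet> (Q *v y)))"
proof -
  have "\<bar>\<mu>\<^sup>2 * (x \<bullet> (Q *v y))\<bar> \<le> (\<mu> * qnorm Q x) * (\<mu> * qnorm Q y)"
    using mult_left_mono[OF qnorm_cauchy_schwarz[of x y], of "\<mu>\<^sup>2"]
    by (simp add: abs_mult power2_eq_square algebra_simps)
  then have "cosh (sqrt ((\<mu> * qnorm Q x)\<^sup>2 + 2 * (\<mu>\<^sup>2 * (x \<bullet> (Q *v y))) + (\<mu> * qnorm Q y)\<^sup>2))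
      \<le> cosh (\<mu> * qnorm Q x) * cosh (\<mu> * c)
        + sinh (\<mu> * qnorm Q x) / (\<mu> * qnorm Q x) * (sinh (\<mu> * c) / (\<mu> * c)) * (\<mu>\<^sup>2 * (x \<bullet> (Q *v y)))"
    using \<mu> y qnorm_nonneg by (intro cosh_sqrt_sum_le) auto
  moreover have "(\<mu> * qnorm Q x)\<^sup>2 + 2 * (\<mu>\<^sup>2 * (x \<bullet> (Q *v y))) + (\<mu> * qnorm Q y)\<^sup>2
      = (\<mu> * qnorm Q (x + y))\<^sup>2"
    using inner_matrix_symmetric[OF symmetric, of x y]
    by (simp add: qnorm_square quadratic_form_add[OF symmetric] algebra_simps)
  ultimately show ?thesis
    using \<mu> qnorm_nonneg by simp
qed

end

section \<open>Probabilistic tools\<close>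

lemma borel_measurable_matrix_vector_mult [measurable]:
  fixes A :: "real^'n^'m"
  shows "f \<in> borel_measurable N \<Longrightarrow> (\<lambda>x. A *v f x) \<in> borel_measurable N"
  by (rule borel_measurable_continuous_on[OF linear_continuous_on]) simp

lemma bounded_linear_matrix_vector_mult_left: "bounded_linear (\<lambda>X::real^'n^'m. X *v v)"
  unfolding linear_conv_bounded_linear[symmetric]
  by (rule linearI) (simp_all add: matrix_vector_mult_add_rdistrib scaleR_matrix_vector_assoc)

lemma borel_measurable_matrix_vector_mult_left [measurable]:
  fixes f :: "'a \<Rightarrow> real^'n^'m"
  shows "f \<in> borel_measurable N \<Longrightarrow> (\<lambda>x. f x *v v) \<in> borel_measurable N"
  by (rule borel_measurable_continuous_on[OF linear_continuous_on[OF bounded_linear_matrix_vector_mult_left]])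

lemma borel_measurable_cosh [measurable]: "(cosh :: real \<Rightarrow> real) \<in> borel_measurable borel"
  by (intro borel_measurable_continuous_onI continuous_intros)

lemma borel_measurable_sinh [measurable]: "(sinh :: real \<Rightarrow> real) \<in> borel_measurable borel"
  by (intro borel_measurable_continuous_onI continuous_intros)

lemma (in prob_space) integrable_bounded:
  fixes f :: "'a \<Rightarrow> 'b::{banach, second_countable_topology}"
  assumes "f \<in> borel_measurable M" "\<And>\<omega>. \<omega> \<in> space M \<Longrightarrow> norm (f \<omega>) \<le> K"
  shows "integrable M f"
  using assms by (intro integrable_const_bound[where B=K]) auto

lemma (in prob_space) indep_var_inner_expectation_zero:
  fixes X Y :: "'a \<Rightarrow> real^'n"
  assumes indep: "indep_var borel X borel Y"
    and X: "integrable M X" and Y: "integrable M Y" and Y_mean: "expectation Y = 0"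
  shows "integrable M (\<lambda>\<omega>. X \<omega> \<bullet> Y \<omega>)" and "expectation (\<lambda>\<omega>. X \<omega> \<bullet> Y \<omega>) = 0"
proof -
  have indep_i: "indep_var borel (\<lambda>\<omega>. X \<omega> $ i) borel (\<lambda>\<omega>. Y \<omega> $ i)" for i
    using indep_var_compose[OF indep, of "\<lambda>x. x $ i" borel "\<lambda>x. x $ i" borel] by (simp add: comp_def)
  have X_i: "integrable M (\<lambda>\<omega>. X \<omega> $ i)" and Y_i: "integrable M (\<lambda>\<omega>. Y \<omega> $ i)" for i
    using X Y by (auto intro: integrable_bounded_linear[OF bounded_linear_vec_nth])
  have "expectation (\<lambda>\<omega>. Y \<omega> $ i) = 0" for i
    using integral_bounded_linear[OF bounded_linear_vec_nth Y, of i] Y_mean by simp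
  then have "expectation (\<lambda>\<omega>. X \<omega> $ i * Y \<omega> $ i) = 0" for i
    using indep_var_lebesgue_integral[OF indep_i X_i Y_i] by simp
  moreover have int_i: "integrable M (\<lambda>\<omega>. X \<omega> $ i * Y \<omega> $ i)" for i
    by (rule indep_var_integrable[OF indep_i X_i Y_i])
  ultimately show "integrable M (\<lambda>\<omega>. X \<omega> \<bullet> Y \<omega>)" "expectation (\<lambda>\<omega>. X \<omega> \<bullet> Y \<omega>) = 0"
    by (simp_all add: inner_vec_def)
qed

lemma le_mult_of_forall_le_mult_add:
  fixes x y K :: real
  assumes "0 \<le> K" and le: "\<And>e. 0 < e \<Longrightarrow> x \<le> K * (y + e)"
  shows "x \<le> K * y"
proof (rule field_le_epsilon)
  fix e :: real assume "0 < e"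
  then have "x \<le> K * (y + e / (K + 1))" using assms by (intro le) simp
  also have "\<dots> \<le> K * y + e"
    using \<open>0 < e\<close> \<open>0 \<le> K\<close> by (simp add: field_simps)
  finally show "x \<le> K * y + e" .
qed

lemma (in prob_space) expectation_powr_le_cosh:
  fixes X :: "'a \<Rightarrow> real"
  assumes X: "X \<in> borel_measurable M" "\<And>\<omega>. \<omega> \<in> space M \<Longrightarrow> 0 \<le> X \<omega>"
    and cosh_int: "integrable M (\<lambda>\<omega>. cosh (\<mu> * X \<omega>))" and \<mu>: "0 < \<mu>" and p: "0 < p"
  shows "expectation (\<lambda>\<omega>. X \<omega> powr p)
    \<le> 2 * (p / (exp 1 * \<mu>)) powr p * expectation (\<lambda>\<omega>. cosh (\<mu> * X \<omega>))"
proof -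
  define K where "K = 2 * (p / (exp 1 * \<mu>)) powr p"
  have pw: "X \<omega> powr p \<le> K * cosh (\<mu> * X \<omega>)" if "\<omega> \<in> space M" for \<omega>
    unfolding K_def using powr_le_cosh_mult[OF X(2)[OF that] \<mu> p] .
  have "integrable M (\<lambda>\<omega>. X \<omega> powr p)"
  proof (rule Bochner_Integration.integrable_bound)
    show "integrable M (\<lambda>\<omega>. K * cosh (\<mu> * X \<omega>))" using cosh_int by simp
    show "AE \<omega> in M. norm (X \<omega> powr p) \<le> norm (K * cosh (\<mu> * X \<omega>))"
      using pw by (intro AE_I2) (simp add: K_def abs_mult)
  qed (use X(1) in measurable)
  then have "expectation (\<lambda>\<omega>. X \<omega> powr p) \<le> expectation (\<lambda>\<omega>. K * cosh (\<mu> * X \<omega>))"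
    using cosh_int pw by (intro integral_mono) auto
  then show ?thesis by (simp add: K_def)
qed

lemma (in prob_space) moment_le_of_cosh_expectation_le:
  fixes X :: "'a \<Rightarrow> real"
  assumes X: "X \<in> borel_measurable M" "\<And>\<omega>. \<omega> \<in> space M \<Longrightarrow> 0 \<le> X \<omega>"
    and cosh_int: "\<And>\<mu>. integrable M (\<lambda>\<omega>. cosh (\<mu> * X \<omega>))"
    and cosh_le: "\<And>\<mu>. 0 < \<mu> \<Longrightarrow> expectation (\<lambda>\<omega>. cosh (\<mu> * X \<omega>)) \<le> exp (\<mu>\<^sup>2 * \<sigma>\<^sup>2 / 2)"
    and \<sigma>: "0 \<le> \<sigma>" and p: "2 \<le> p"
  shows "expectation (\<lambda>\<omega>. X \<omega> powr p) powr (1 / p) \<le> sqrt p * \<sigma>"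
proof (rule le_mult_of_forall_le_mult_add)
  fix e :: real assume "0 < e"
  define s where "s = \<sigma> + e"
  define \<mu> where "\<mu> = sqrt p / s"
  have "0 < p" using p by linarith
  have s: "0 < s" and \<mu>: "0 < \<mu>" using \<sigma> \<open>0 < e\<close> \<open>0 < p\<close> by (simp_all add: s_def \<mu>_def)
  have "expectation (\<lambda>\<omega>. X \<omega> powr p)
      \<le> 2 * (p / (exp 1 * \<mu>)) powr p * expectation (\<lambda>\<omega>. cosh (\<mu> * X \<omega>))"
    by (rule expectation_powr_le_cosh[OF X cosh_int \<mu> \<open>0 < p\<close>])
  also have "\<dots> \<le> 2 * (p / (exp 1 * \<mu>)) powr p * exp (p / 2)"
  proof -
    have "\<sigma>\<^sup>2 \<le> s\<^sup>2" using \<sigma> \<open>0 < e\<close> by (simp add: s_def power_mono)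
    then have "exp (\<mu>\<^sup>2 * \<sigma>\<^sup>2 / 2) \<le> exp (\<mu>\<^sup>2 * s\<^sup>2 / 2)" by (simp add: mult_left_mono)
    also have "\<mu>\<^sup>2 * s\<^sup>2 / 2 = p / 2" using p s by (simp add: \<mu>_def power_divide)
    finally have "exp (\<mu>\<^sup>2 * \<sigma>\<^sup>2 / 2) \<le> exp (p / 2)" .
    then show ?thesis using order_trans[OF cosh_le[OF \<mu>]] by (intro mult_left_mono) simp_all
  qed
  also have "\<dots> = 2 / exp (p / 2) * (sqrt p * s) powr p"
  proof -
    have "p / (exp 1 * \<mu>) = sqrt p * s / exp 1"
      using p s by (simp add: \<mu>_def field_simps flip: real_sqrt_mult)
    then have "(p / (exp 1 * \<mu>)) powr p = (sqrt p * s) powr p / exp p"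
      using p s by (simp add: powr_divide exp_powr_real)
    moreover have "exp p = exp (p / 2) * exp (p / 2)" by (simp flip: exp_add)
    ultimately show ?thesis by simp
  qed
  also have "\<dots> \<le> (sqrt p * s) powr p"
  proof -
    have "2 \<le> exp (1::real)" using exp_ge_add_one_self[of 1] by simp
    also have "\<dots> \<le> exp (p / 2)" using p by simp
    finally have "2 / exp (p / 2) \<le> 1" by simp
    then show ?thesis using mult_right_mono[of "2 / exp (p / 2)" 1 "(sqrt p * s) powr p"] by simp
  qed
  finally have "expectation (\<lambda>\<omega>. X \<omega> powr p) powr (1 / p) \<le> ((sqrt p * s) powr p) powr (1 / p)"
    using p by (intro powr_mono2) (simp_all add: integral_nonneg)
  also have "\<dots> = sqrt p * (\<sigma> + e)"
    using p s by (simp add: powr_powr s_def)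
  finally show "expectation (\<lambda>\<omega>. X \<omega> powr p) powr (1 / p) \<le> sqrt p * (\<sigma> + e)" .
qed (use p in simp)

section \<open>The noise recursion\<close>

locale lsa_noise = prob_space M + sym_pos_def Q
  for M :: "'w measure" and Q :: "real^'d^'d" +
  fixes Mz :: "'z measure" and Z :: "nat \<Rightarrow> 'w \<Rightarrow> 'z" and eps :: "'z \<Rightarrow> real^'d"
    and Ab :: "real^'d^'d" and \<alpha> \<gamma> Eb :: real
  assumes Mz: "prob_space Mz"
    and Z_measurable: "\<And>k. 1 \<le> k \<Longrightarrow> Z k \<in> M \<rightarrow>\<^sub>M Mz"
    and Z_indep: "indep_vars (\<lambda>_. Mz) Z {1..}"
    and Z_distr: "\<And>k. 1 \<le> k \<Longrightarrow> distr M Mz (Z k) = Mz"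
    and eps_measurable [measurable]: "eps \<in> borel_measurable Mz"
    and eps_bounded: "\<And>z. z \<in> space Mz \<Longrightarrow> norm (eps z) \<le> Eb"
    and eps_mean: "integral\<^sup>L Mz eps = 0"
    and contraction: "\<And>x. qnorm Q ((mat 1 - \<alpha> *\<^sub>R Ab) *v x) \<le> sqrt \<gamma> * qnorm Q x"
    and \<gamma>: "0 \<le> \<gamma>" "\<gamma> < 1" and \<alpha>: "0 < \<alpha>" and Eb: "0 \<le> Eb"
begin

abbreviation "J \<equiv> J0 \<alpha> Ab eps Z"
abbreviation "B \<equiv> mat 1 - \<alpha> *\<^sub>R Ab"

definition noise_bound :: real where "noise_bound = \<alpha> * sqrt lmax * Eb"

lemma noise_bound_nonneg: "0 \<le> noise_bound"
  using \<alpha> Eb lmin_pos lmin_le_lmax by (simp add: noise_bound_def)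

lemma qnorm_noise_le:
  assumes "z \<in> space Mz"
  shows "qnorm Q ((- \<alpha>) *\<^sub>R eps z) \<le> noise_bound"
proof -
  have "qnorm Q ((- \<alpha>) *\<^sub>R eps z) \<le> \<alpha> * (sqrt lmax * norm (eps z))"
    unfolding qnorm_scaleR using qnorm_le_norm[of "eps z"] \<alpha> by simp
  also have "\<dots> \<le> noise_bound"
    using eps_bounded[OF assms] \<alpha> lmin_pos lmin_le_lmax by (simp add: noise_bound_def mult_left_mono)
  finally show ?thesis .
qed

lemma Z_Suc_measurable [measurable]: "Z (Suc k) \<in> M \<rightarrow>\<^sub>M Mz"
  using Z_measurable by simp

lemma J_measurable [measurable]: "J n \<in> borel_measurable M"
  by (induction n) (simp_all add: J0.simps(2)[abs_def])

lemma J_bounded: "\<exists>R\<ge>0. \<forall>\<omega>\<in>space M. norm (J n \<omega>) \<le> R"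
proof (induction n)
  case (Suc n)
  then obtain R where R: "0 \<le> R" "\<And>\<omega>. \<omega> \<in> space M \<Longrightarrow> norm (J n \<omega>) \<le> R" by blast
  have "norm (J (Suc n) \<omega>) \<le> spec_norm B * R + \<alpha> * Eb" if "\<omega> \<in> space M" for \<omega>
  proof -
    have "norm (J (Suc n) \<omega>) \<le> norm (B *v J n \<omega>) + \<alpha> * norm (eps (Z (Suc n) \<omega>))"
      using norm_triangle_ineq4[of "B *v J n \<omega>" "\<alpha> *\<^sub>R eps (Z (Suc n) \<omega>)"] \<alpha> by simp
    also have "\<dots> \<le> spec_norm B * R + \<alpha> * Eb"
      using spec_norm_mult_vector[of B "J n \<omega>"] R(2)[OF that] spec_norm_nonneg[of B] \<alpha>
        eps_bounded[OF measurable_space[OF Z_Suc_measurable that]]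
      by (intro add_mono) (auto intro: order_trans mult_left_mono)
    finally show ?thesis .
  qed
  moreover have "0 \<le> spec_norm B * R + \<alpha> * Eb"
    using R(1) spec_norm_nonneg[of B] \<alpha> Eb by simp
  ultimately show ?case by blast
qed auto

lemma integrable_cosh_J:
  assumes [measurable]: "f \<in> borel_measurable borel" and f: "\<And>x. \<bar>f x\<bar> \<le> K * norm x"
  shows "integrable M (\<lambda>\<omega>. cosh (f (J n \<omega>)))"
proof -
  obtain R where R: "0 \<le> R" "\<And>\<omega>. \<omega> \<in> space M \<Longrightarrow> norm (J n \<omega>) \<le> R" using J_bounded by blast
  show ?thesis
  proof (rule integrable_bounded)
    fix \<omega> assume "\<omega> \<in> space M"
    then have "\<bar>f (J n \<omega>)\<bar> \<le> \<bar>K\<bar> * R"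
      using f[of "J n \<omega>"] R mult_mono[of K "\<bar>K\<bar>" "norm (J n \<omega>)" R] by force
    then show "norm (cosh (f (J n \<omega>))) \<le> cosh (\<bar>K\<bar> * R)"
      using R by (simp add: cosh_real_nonneg_le_iff[symmetric, of "\<bar>f (J n \<omega>)\<bar>"])
  qed measurable
qed

(* J m as a function of the samples, computed on the one-point sample space. *)
definition J_samples :: "nat \<Rightarrow> (nat \<Rightarrow> 'z) \<Rightarrow> real^'d" where
  "J_samples m f = J0 \<alpha> Ab eps (\<lambda>k _. f k) m ()"

lemma J_samples_measurable: "m \<le> n \<Longrightarrow> J_samples m \<in> borel_measurable (PiM {1..n} (\<lambda>_. Mz))"
proof (induction m)
  case (Suc m)
  then have "(\<lambda>f. f (Suc m)) \<in> PiM {1..n} (\<lambda>_. Mz) \<rightarrow>\<^sub>M Mz"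
    by (intro measurable_component_singleton) auto
  with Suc show ?case by (simp add: J_samples_def[abs_def])
qed (simp add: J_samples_def[abs_def])

lemma J_eq_J_samples: "m \<le> n \<Longrightarrow> J m \<omega> = J_samples m (restrict (\<lambda>k. Z k \<omega>) {1..n})"
  by (induction m) (simp_all add: J_samples_def)

lemma indep_J_noise:
  assumes [measurable]: "h \<in> borel_measurable borel"
  shows "indep_var borel (\<lambda>\<omega>. h (J n \<omega>)) borel (\<lambda>\<omega>. eps (Z (Suc n) \<omega>))"
proof -
  have "(\<lambda>f. f (Suc n)) \<in> PiM {Suc n} (\<lambda>_. Mz) \<rightarrow>\<^sub>M Mz"
    by (intro measurable_component_singleton) auto
  then have "indep_var borel ((\<lambda>f. h (J_samples n f)) \<circ> (\<lambda>\<omega>. restrict (\<lambda>k. Z k \<omega>) {1..n}))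
      borel ((\<lambda>f. eps (f (Suc n))) \<circ> (\<lambda>\<omega>. restrict (\<lambda>k. Z k \<omega>) {Suc n}))"
    using J_samples_measurable[of n n]
    by (intro indep_var_compose[OF indep_var_restrict[OF Z_indep]]) auto
  then show ?thesis by (simp add: comp_def J_eq_J_samples[of n n])
qed

lemma expectation_noise: "expectation (\<lambda>\<omega>. eps (Z (Suc n) \<omega>)) = 0"
proof -
  have "expectation (\<lambda>\<omega>. eps (Z (Suc n) \<omega>)) = integral\<^sup>L (distr M Mz (Z (Suc n))) eps"
    by (rule integral_distr[symmetric]) measurable
  then show ?thesis using Z_distr[of "Suc n"] eps_mean by simp
qed

lemma inner_J_noise_mean_zero:
  assumes h [measurable]: "h \<in> borel_measurable borel"
    and H: "\<And>\<omega>. \<omega> \<in> space M \<Longrightarrow> norm (h (J n \<omega>)) \<le> H"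
  shows "integrable M (\<lambda>\<omega>. h (J n \<omega>) \<bullet> eps (Z (Suc n) \<omega>))"
    and "expectation (\<lambda>\<omega>. h (J n \<omega>) \<bullet> eps (Z (Suc n) \<omega>)) = 0"
proof -
  have "integrable M (\<lambda>\<omega>. h (J n \<omega>))"
    using H by (intro integrable_bounded) measurable
  moreover have "integrable M (\<lambda>\<omega>. eps (Z (Suc n) \<omega>))"
    using eps_bounded measurable_space[OF Z_Suc_measurable] by (intro integrable_bounded) auto
  ultimately show "integrable M (\<lambda>\<omega>. h (J n \<omega>) \<bullet> eps (Z (Suc n) \<omega>))"
    and "expectation (\<lambda>\<omega>. h (J n \<omega>) \<bullet> eps (Z (Suc n) \<omega>)) = 0"
    using indep_var_inner_expectation_zero[OF indep_J_noise[OF h]] expectation_noise by blast+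
qed

(* The coefficient of eps (Z (Suc n)) in the one-step bound cosh_qnorm_J_Suc_le; it is a
   function of J n alone, so the cross term has mean zero. *)
definition cross_coeff :: "real \<Rightarrow> real^'d \<Rightarrow> real^'d" where
  "cross_coeff \<mu> v = (- \<alpha> * \<mu>\<^sup>2 * (sinh (\<mu> * qnorm Q (B *v v)) / (\<mu> * qnorm Q (B *v v)))
      * (sinh (\<mu> * noise_bound) / (\<mu> * noise_bound))) *\<^sub>R (Q *v (B *v v))"

lemma cross_coeff_measurable [measurable]: "cross_coeff \<mu> \<in> borel_measurable borel"
  unfolding cross_coeff_def[abs_def] qnorm_def by measurable

lemma cross_coeff_J_bounded:
  assumes \<mu>: "0 < \<mu>"
  shows "\<exists>H. \<forall>\<omega>\<in>space M. norm (cross_coeff \<mu> (J n \<omega>)) \<le> H"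
proof -
  obtain R where R: "0 \<le> R" "\<And>\<omega>. \<omega> \<in> space M \<Longrightarrow> norm (J n \<omega>) \<le> R" using J_bounded by blast
  define R' where "R' = \<mu> * sqrt lmax * (spec_norm B * R) + 1"
  define w where "w = sinh (\<mu> * noise_bound) / (\<mu> * noise_bound)"
  have "0 \<le> \<mu> * sqrt lmax * (spec_norm B * R)"
    using \<mu> R(1) spec_norm_nonneg[of B] lmin_pos lmin_le_lmax by simp
  then have R': "0 < R'" by (simp add: R'_def)
  have "norm (cross_coeff \<mu> (J n \<omega>)) \<le> \<alpha> * \<mu>\<^sup>2 * (sinh R' / R') * \<bar>w\<bar> * (spec_norm Q * (spec_norm B * R))"
    if \<omega>: "\<omega> \<in> space M" for \<omega>
  proof -
    define x where "x = B *v J n \<omega>"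
    define v where "v = sinh (\<mu> * qnorm Q x) / (\<mu> * qnorm Q x)"
    have x: "norm x \<le> spec_norm B * R"
      using spec_norm_mult_vector[of B "J n \<omega>"] R(2)[OF \<omega>] spec_norm_nonneg[of B]
      by (simp add: x_def order_trans mult_left_mono)
    have "\<mu> * qnorm Q x \<le> \<mu> * (sqrt lmax * (spec_norm B * R))"
      using qnorm_le_norm[of x] x \<mu> lmin_pos lmin_le_lmax
      by (intro mult_left_mono) (auto intro: order_trans mult_left_mono)
    then have "\<mu> * qnorm Q x \<le> R'" by (simp add: R'_def mult.assoc)
    then have v: "\<bar>v\<bar> \<le> sinh R' / R'"
      using sinh_div_mono[of "\<mu> * qnorm Q x" R'] R' \<mu> qnorm_nonneg[of x]
      by (cases "qnorm Q x = 0") (auto simp: v_def zero_less_mult_iff)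
    have Qx: "norm (Q *v x) \<le> spec_norm Q * (spec_norm B * R)"
      using spec_norm_mult_vector[of Q x] x spec_norm_pos by (meson mult_left_mono order_trans less_imp_le)
    have "cross_coeff \<mu> (J n \<omega>) = (- \<alpha> * \<mu>\<^sup>2 * v * w) *\<^sub>R (Q *v x)"
      by (simp add: cross_coeff_def v_def w_def x_def)
    then have "norm (cross_coeff \<mu> (J n \<omega>)) = \<alpha> * \<mu>\<^sup>2 * \<bar>v\<bar> * \<bar>w\<bar> * norm (Q *v x)"
      using \<alpha> by (simp add: abs_mult)
    also have "\<dots> \<le> \<alpha> * \<mu>\<^sup>2 * (sinh R' / R') * \<bar>w\<bar> * (spec_norm Q * (spec_norm B * R))"
      using \<alpha> v Qx R' by (intro mult_mono mult_right_mono mult_left_mono) auto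
    finally show ?thesis .
  qed
  then show ?thesis by blast
qed

lemma cosh_qnorm_J_Suc_le:
  assumes \<mu>: "0 < \<mu>" and \<omega>: "\<omega> \<in> space M"
  shows "cosh (\<mu> * qnorm Q (J (Suc n) \<omega>))
    \<le> cosh (\<mu> * sqrt \<gamma> * qnorm Q (J n \<omega>)) * cosh (\<mu> * noise_bound)
      + cross_coeff \<mu> (J n \<omega>) \<bullet> eps (Z (Suc n) \<omega>)"
proof -
  define x where "x = B *v J n \<omega>"
  define e where "e = eps (Z (Suc n) \<omega>)"
  have J_Suc: "J (Suc n) \<omega> = x + (- \<alpha>) *\<^sub>R e" by (simp add: x_def e_def)
  have noise: "qnorm Q ((- \<alpha>) *\<^sub>R e) \<le> noise_bound"
    unfolding e_def by (rule qnorm_noise_le[OF measurable_space[OF Z_Suc_measurable \<omega>]])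
  have "cosh (\<mu> * qnorm Q (J (Suc n) \<omega>))
      \<le> cosh (\<mu> * qnorm Q x) * cosh (\<mu> * noise_bound)
        + sinh (\<mu> * qnorm Q x) / (\<mu> * qnorm Q x) * (sinh (\<mu> * noise_bound) / (\<mu> * noise_bound))
          * (\<mu>\<^sup>2 * (x \<bullet> (Q *v (- \<alpha>) *\<^sub>R e)))"
    unfolding J_Suc by (rule cosh_qnorm_add_le[OF \<mu> noise])
  also have "sinh (\<mu> * qnorm Q x) / (\<mu> * qnorm Q x) * (sinh (\<mu> * noise_bound) / (\<mu> * noise_bound))
      * (\<mu>\<^sup>2 * (x \<bullet> (Q *v (- \<alpha>) *\<^sub>R e))) = cross_coeff \<mu> (J n \<omega>) \<bullet> e"
    unfolding matrix_vector_mult_scaleR inner_scaleR_right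
    using inner_matrix_symmetric[OF symmetric, of x e]
    by (simp add: cross_coeff_def x_def[symmetric] inner_commute)
  also have "cosh (\<mu> * qnorm Q x) \<le> cosh (\<mu> * sqrt \<gamma> * qnorm Q (J n \<omega>))"
    using contraction[of "J n \<omega>"] \<mu> \<gamma> qnorm_nonneg
    by (simp add: x_def cosh_real_nonneg_le_iff mult.assoc)
  finally show ?thesis
    by (simp add: e_def mult_right_mono)
qed

lemma integrable_cosh_qnorm_J: "integrable M (\<lambda>\<omega>. cosh (t * qnorm Q (J n \<omega>)))"
proof (rule integrable_cosh_J[where K="\<bar>t\<bar> * sqrt lmax"])
  show "(\<lambda>x. t * qnorm Q x) \<in> borel_measurable borel" unfolding qnorm_def by measurable
  show "\<bar>t * qnorm Q x\<bar> \<le> \<bar>t\<bar> * sqrt lmax * norm x" for x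
    using qnorm_le_norm[of x] qnorm_nonneg[of x] by (simp add: abs_mult mult_left_mono mult.assoc)
qed

lemma integrable_cosh_norm_J: "integrable M (\<lambda>\<omega>. cosh (t * norm (J n \<omega>)))"
  by (rule integrable_cosh_J[where K="\<bar>t\<bar>"]) (simp_all add: abs_mult)

lemma expectation_cosh_qnorm_J_le:
  assumes "0 \<le> \<mu>"
  shows "expectation (\<lambda>\<omega>. cosh (\<mu> * qnorm Q (J n \<omega>))) \<le> exp (\<mu>\<^sup>2 * noise_bound\<^sup>2 / (2 * (1 - \<gamma>)))"
  using assms
proof (induction n arbitrary: \<mu>)
  case 0
  then show ?case using \<gamma> by (simp add: qnorm_def prob_space)
next
  case (Suc n)
  show ?case
  proof (cases "\<mu> = 0")
    case True
    then show ?thesis by (simp add: prob_space)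
  next
    case False
    then have \<mu>: "0 < \<mu>" using Suc.prems by simp
    obtain H where "\<forall>\<omega>\<in>space M. norm (cross_coeff \<mu> (J n \<omega>)) \<le> H"
      using cross_coeff_J_bounded[OF \<mu>] by blast
    note cross = inner_J_noise_mean_zero[OF cross_coeff_measurable bspec[OF this]]
    have "expectation (\<lambda>\<omega>. cosh (\<mu> * qnorm Q (J (Suc n) \<omega>)))
        \<le> expectation (\<lambda>\<omega>. cosh (\<mu> * sqrt \<gamma> * qnorm Q (J n \<omega>)) * cosh (\<mu> * noise_bound)
            + cross_coeff \<mu> (J n \<omega>) \<bullet> eps (Z (Suc n) \<omega>))"
      using cosh_qnorm_J_Suc_le[OF \<mu>] integrable_cosh_qnorm_J cross(1)
      by (intro integral_mono) (auto simp del: J0.simps)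
    also have "\<dots> = expectation (\<lambda>\<omega>. cosh (\<mu> * sqrt \<gamma> * qnorm Q (J n \<omega>))) * cosh (\<mu> * noise_bound)"
      using integrable_cosh_qnorm_J cross by simp
    also have "\<dots> \<le> exp ((\<mu> * sqrt \<gamma>)\<^sup>2 * noise_bound\<^sup>2 / (2 * (1 - \<gamma>))) * exp ((\<mu> * noise_bound)\<^sup>2 / 2)"
      using Suc.IH[of "\<mu> * sqrt \<gamma>"] \<mu> \<gamma> cosh_le_exp_square_half by (intro mult_mono) auto
    also have "\<dots> = exp (\<mu>\<^sup>2 * noise_bound\<^sup>2 / (2 * (1 - \<gamma>)))"
      using \<gamma> by (simp add: mult_exp_exp field_simps)
    finally show ?thesis .
  qed
qed

lemma moment_root_J_le:
  assumes p: "2 \<le> p"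
  shows "expectation (\<lambda>\<omega>. norm (J n \<omega>) powr p) powr (1 / p) \<le> sqrt (p * kappa Q / (1 - \<gamma>)) * \<alpha> * Eb"
proof -
  define \<sigma> where "\<sigma> = noise_bound / sqrt ((1 - \<gamma>) * lmin)"
  have \<sigma>: "0 \<le> \<sigma>" using noise_bound_nonneg \<gamma> lmin_pos by (simp add: \<sigma>_def)
  have "expectation (\<lambda>\<omega>. norm (J n \<omega>) powr p) powr (1 / p) \<le> sqrt p * \<sigma>"
  proof (rule moment_le_of_cosh_expectation_le[OF _ _ integrable_cosh_norm_J _ \<sigma> p])
    fix \<mu> :: real assume \<mu>: "0 < \<mu>"
    have "expectation (\<lambda>\<omega>. cosh (\<mu> * norm (J n \<omega>)))
        \<le> expectation (\<lambda>\<omega>. cosh (\<mu> / sqrt lmin * qnorm Q (J n \<omega>)))"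
      using \<mu> by (intro integral_mono integrable_cosh_norm_J integrable_cosh_qnorm_J
          cosh_norm_le_cosh_qnorm) simp
    also have "\<dots> \<le> exp ((\<mu> / sqrt lmin)\<^sup>2 * noise_bound\<^sup>2 / (2 * (1 - \<gamma>)))"
      using \<mu> lmin_pos by (intro expectation_cosh_qnorm_J_le) simp
    also have "\<dots> = exp (\<mu>\<^sup>2 * \<sigma>\<^sup>2 / 2)"
      using \<gamma> lmin_pos by (simp add: \<sigma>_def field_simps)
    finally show "expectation (\<lambda>\<omega>. cosh (\<mu> * norm (J n \<omega>))) \<le> exp (\<mu>\<^sup>2 * \<sigma>\<^sup>2 / 2)" .
  qed auto
  also have "sqrt p * \<sigma> = sqrt (p * kappa Q / (1 - \<gamma>)) * \<alpha> * Eb"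
    using \<gamma> lmin_pos
    by (simp add: \<sigma>_def noise_bound_def kappa_def lmin_def[symmetric] lmax_def[symmetric]
        real_sqrt_mult real_sqrt_divide field_simps)
  finally show ?thesis .
qed

end

lemma integral_noise_eq_zero:
  fixes A :: "'z \<Rightarrow> real^'n^'n" and b :: "'z \<Rightarrow> real^'n"
  assumes "prob_space Mz" and A_meas: "A \<in> borel_measurable Mz"
    and A_bdd: "\<exists>C. \<forall>z\<in>space Mz. spec_norm (A z) \<le> C" and b_int: "integrable Mz b"
  shows "integral\<^sup>L Mz (\<lambda>z. (A z - integral\<^sup>L Mz A) *v \<theta> - (b z - integral\<^sup>L Mz b)) = 0"
proof -
  interpret prob_space Mz by fact
  obtain C where C: "\<And>z. z \<in> space Mz \<Longrightarrow> spec_norm (A z) \<le> C" using A_bdd by blast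
  have A_int: "integrable Mz A"
  proof (rule integrable_bounded[OF A_meas])
    fix z assume "z \<in> space Mz"
    then show "norm (A z) \<le> real CARD('n) * real CARD('n) * C"
      using norm_matrix_le_spec_norm[of "A z"] C by (simp add: order_trans mult_left_mono)
  qed
  have "integral\<^sup>L Mz (\<lambda>z. (A z - integral\<^sup>L Mz A) *v \<theta>) = integral\<^sup>L Mz (\<lambda>z. A z - integral\<^sup>L Mz A) *v \<theta>"
    using A_int by (intro integral_bounded_linear[OF bounded_linear_matrix_vector_mult_left]) auto
  moreover have "integral\<^sup>L Mz (\<lambda>z. A z - integral\<^sup>L Mz A) = 0"
    using A_int by (simp add: prob_space)
  moreover have "integral\<^sup>L Mz (\<lambda>z. b z - integral\<^sup>L Mz b) = 0"
    using b_int by (simp add: prob_space)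
  moreover have "integrable Mz (\<lambda>z. (A z - integral\<^sup>L Mz A) *v \<theta>)"
    using A_int by (intro integrable_bounded_linear[OF bounded_linear_matrix_vector_mult_left]) auto
  ultimately show ?thesis
    using b_int by simp
qed

theorem proposition3:
  fixes Mz :: "'z measure" and M :: "'w measure"
    and A :: "'z \<Rightarrow> real^'d^'d" and b :: "'z \<Rightarrow> real^'d"
    and Q :: "real^'d^'d" and Z :: "nat \<Rightarrow> 'w \<Rightarrow> 'z"
    and \<alpha> p :: real and n :: nat
  defines "Abar \<equiv> integral\<^sup>L Mz A"
    and "bbar \<equiv> integral\<^sup>L Mz b"
  defines "\<theta>s \<equiv> matrix_inv Abar *v bbar"
  defines "eps \<equiv> (\<lambda>z. (A z - Abar) *v \<theta>s - (b z - bbar))"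
  defines "eps_inf \<equiv> (SUP z\<in>space Mz. norm (eps z))"
  defines "a \<equiv> 1 / (2 * spec_norm Q)"
  defines "\<alpha>_inf \<equiv> min (1 / (2 * (qmnorm Q Abar)\<^sup>2 * spec_norm Q)) (spec_norm Q)"
  defines "D1 \<equiv> sqrt (2 * kappa Q) / a"
  assumes Mz: "prob_space Mz"
    and A_meas: "A \<in> borel_measurable Mz"
    and b_meas: "b \<in> borel_measurable Mz"
    and b_int: "integrable Mz b"
    and A_bdd: "\<exists>C. \<forall>z\<in>space Mz. spec_norm (A z) \<le> C"
    and At_bdd: "\<exists>C. \<forall>z\<in>space Mz. spec_norm (A z - Abar) \<le> C"
    and hurwitz: "pos_hurwitz Abar"
    and eps_bdd: "\<exists>C. \<forall>z\<in>space Mz. norm (eps z) \<le> C"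
    and Q_sym: "transpose Q = Q"
    and Q_pd: "\<And>x. x \<noteq> 0 \<Longrightarrow> x \<bullet> (Q *v x) > 0"
    and Q_lyap: "transpose Abar ** Q + Q ** Abar = mat 1"
    and M: "prob_space M"
    and Z_meas: "\<And>k. k \<ge> 1 \<Longrightarrow> Z k \<in> M \<rightarrow>\<^sub>M Mz"
    and Z_indep: "prob_space.indep_vars M (\<lambda>_. Mz) Z {1..}"
    and Z_distr: "\<And>k. k \<ge> 1 \<Longrightarrow> distr M Mz (Z k) = Mz"
    and \<alpha>_pos: "0 < \<alpha>" and \<alpha>_le: "\<alpha> \<le> \<alpha>_inf"
    and p_ge: "p \<ge> 2"
  shows "(prob_space.expectation M (\<lambda>\<omega>. norm (J0 \<alpha> Abar eps Z n \<omega>) powr p)) powr (1 / p)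
           \<le> D1 * sqrt (\<alpha> * a * p) * eps_inf"
proof -
  interpret Q: sym_pos_def Q using Q_sym Q_pd by unfold_locales
  have a: "0 < a" and \<alpha>a: "\<alpha> * a \<le> 1 / 2"
    using Q.spec_norm_pos \<alpha>_le by (auto simp: a_def \<alpha>_inf_def field_simps)
  have eps_le: "norm (eps z) \<le> eps_inf" if "z \<in> space Mz" for z
    unfolding eps_inf_def using eps_bdd that by (auto intro!: cSUP_upper bdd_aboveI2)
  then have eps_inf: "0 \<le> eps_inf"
    using prob_space.not_empty[OF Mz] by (meson ex_in_conv norm_ge_zero order_trans)
  interpret lsa_noise M Q Mz Z eps Abar \<alpha> "1 - \<alpha> * a" eps_inf
  proof (intro lsa_noise.intro[OF M Q.sym_pos_def_axioms] lsa_noise_axioms.intro)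
    show "eps \<in> borel_measurable Mz" unfolding eps_def using A_meas b_meas by measurable
    show "integral\<^sup>L Mz eps = 0"
      unfolding eps_def Abar_def bbar_def by (rule integral_noise_eq_zero[OF Mz A_meas A_bdd b_int])
    show "qnorm Q ((mat 1 - \<alpha> *\<^sub>R Abar) *v x) \<le> sqrt (1 - \<alpha> * a) * qnorm Q x" for x
      using real_sqrt_le_mono[OF Q.lyapunov_contraction[OF Q_lyap \<alpha>_pos, of x]] \<alpha>_le Q.qnorm_nonneg
      by (simp add: \<alpha>_inf_def a_def real_sqrt_mult)
    show "0 \<le> 1 - \<alpha> * a" "1 - \<alpha> * a < 1" using \<alpha>a \<alpha>_pos a by simp_all
  qed (fact Mz Z_meas Z_indep Z_distr eps_le \<alpha>_pos eps_inf)+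
  have "expectation (\<lambda>\<omega>. norm (J n \<omega>) powr p) powr (1 / p) \<le> sqrt (p * kappa Q / (\<alpha> * a)) * \<alpha> * eps_inf"
    using moment_root_J_le[OF p_ge] by simp
  also have "\<dots> = sqrt (kappa Q) / a * sqrt (\<alpha> * a * p) * eps_inf"
    using \<alpha>_pos a p_ge by (simp add: real_sqrt_mult real_sqrt_divide field_simps)
  also have "\<dots> \<le> D1 * sqrt (\<alpha> * a * p) * eps_inf"
    unfolding D1_def using a eps_inf Q.kappa_pos \<alpha>_pos p_ge
    by (intro mult_right_mono divide_right_mono real_sqrt_le_mono) auto
  finally show ?thesis .
qed

end
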